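(* Let $|q|>1$, $n\geq 0$, and consider the function \[ \Phi(z;t_r;u_0,u_1)=\prod_{k=0}^{n-1} \frac{1}{(pq^{n-k}z/u_0,\,q^{n-k} /(u_0z);p)}\cdot \frac{1}{(pu_0z/q,\, u_0/(qz),\,pu_1z/q^n,\,u_1/(q^nz) ;p,q^{-1}) \prod_{r=0}^3 (pt_rz/q,\,t_r/(qz) ;p,q^{-1})}. \] Substitute $z\to zp^{\zeta}$, $t_r\to t_rp^{\alpha_r}$ $(0\le r\le 3)$, $u_0\to u_0p^{\alpha_4}$, $u_1\to u_1p^{\alpha_5}$, with $(\alpha;\zeta)=(\alpha_0,\dots,\alpha_5;\zeta)$ in the polytope $P$. Then the leading coefficient (limit as $p\to0$ after rescaling by $p^{-val}$) of the resulting function depends on $z$ only if $\alpha_r+\tfrac12=|\zeta+\tfrac12|$ for some $0\leq r\leq 5$, or $\alpha_4 + |\zeta+\tfrac12| \geq \tfrac12$.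
   Context: For $|a|<1$ write $(x;a)=\prod_{j\ge0}(1-xa^j)$ and $(x;p,a)=\prod_{i,j\ge0}(1-xp^ia^j)$, written multiplicatively (a comma-separated list of arguments denotes the product). Here $0<|p|<1$, and $t_0,\dots,t_3,u_0,u_1,z$ are independent of $p$. Valuation and leading coefficient refer to the expansion in (real) powers of $p$: if $F\sim c\,p^{v}$ with $c\neq 0$ independent of $p$ as $p\to0$, then $val(F)=v$ and $lc(F)=c$. $P$ is the set of $(\alpha_0,\dots,\alpha_5;\zeta)\in\mathbb{R}^7$ satisfying $\sum_{i=0}^5\alpha_i=1$, $|\tfrac12+\zeta|\le\tfrac12$, $|\tfrac12+\zeta|-\tfrac12\le\alpha_i$ for all $i$, $\alpha_i\le 1+\alpha_j$ and $\alpha_i+\alpha_j\le 1$ for all distinct $i,j$, and $\alpha_i+\alpha_j+\alpha_k+|\tfrac12+\zeta|\le\tfrac32$ for all distinct $i,j,k$ (indices in $\{0,\dots,5\}$). *)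

theory Defs
  imports "HOL-Analysis.Analysis"
begin

definition qpoch1 :: "complex \<Rightarrow> complex \<Rightarrow> complex" where
  "qpoch1 x a = (\<Prod>j. 1 - x * a ^ j)"

definition qpoch2 :: "complex \<Rightarrow> complex \<Rightarrow> complex \<Rightarrow> complex" where
  "qpoch2 x p a = (\<Prod>i. qpoch1 (x * p ^ i) a)"

definition Phi :: "nat \<Rightarrow> complex \<Rightarrow> complex \<Rightarrow> complex \<Rightarrow> (nat \<Rightarrow> complex)
                    \<Rightarrow> complex \<Rightarrow> complex \<Rightarrow> complex" where
  "Phi n q p z t u0 u1 =
     1 / ( (\<Prod>k<n. qpoch1 (p * q ^ (n - k) * z / u0) p * qpoch1 (q ^ (n - k) / (u0 * z)) p)
         * qpoch2 (p * u0 * z / q) p (1 / q) * qpoch2 (u0 / (q * z)) p (1 / q)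
         * qpoch2 (p * u1 * z / q ^ n) p (1 / q) * qpoch2 (u1 / (q ^ n * z)) p (1 / q)
         * (\<Prod>r<4. qpoch2 (p * t r * z / q) p (1 / q) * qpoch2 (t r / (q * z)) p (1 / q)))"

definition inP :: "(nat \<Rightarrow> real) \<Rightarrow> real \<Rightarrow> bool" where
  "inP \<alpha> \<zeta> \<longleftrightarrow>
     (\<Sum>i<6. \<alpha> i) = 1 \<and> \<bar>1/2 + \<zeta>\<bar> \<le> 1/2 \<and>
     (\<forall>i<6. \<bar>1/2 + \<zeta>\<bar> - 1/2 \<le> \<alpha> i) \<and>
     (\<forall>i<6. \<forall>j<6. i \<noteq> j \<longrightarrow> \<alpha> i \<le> 1 + \<alpha> j \<and> \<alpha> i + \<alpha> j \<le> 1) \<and>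
     (\<forall>i<6. \<forall>j<6. \<forall>k<6. i \<noteq> j \<and> i \<noteq> k \<and> j \<noteq> k \<longrightarrow>
         \<alpha> i + \<alpha> j + \<alpha> k + \<bar>1/2 + \<zeta>\<bar> \<le> 3/2)"

definition Fsub :: "nat \<Rightarrow> complex \<Rightarrow> (nat \<Rightarrow> complex) \<Rightarrow> complex \<Rightarrow> complex
                    \<Rightarrow> (nat \<Rightarrow> real) \<Rightarrow> real \<Rightarrow> complex \<Rightarrow> real \<Rightarrow> complex" where
  "Fsub n q t u0 u1 \<alpha> \<zeta> z p =
     Phi n q (complex_of_real p) (z * complex_of_real (p powr \<zeta>))
       (\<lambda>r. t r * complex_of_real (p powr \<alpha> r))
       (u0 * complex_of_real (p powr \<alpha> 4)) (u1 * complex_of_real (p powr \<alpha> 5))"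

definition has_val_lc :: "(real \<Rightarrow> complex) \<Rightarrow> real \<Rightarrow> complex \<Rightarrow> bool" where
  "has_val_lc F v c \<longleftrightarrow> c \<noteq> 0 \<and>
     ((\<lambda>p. F p / complex_of_real (p powr v)) \<longlongrightarrow> c) (at_right 0)"

end

theory Submission
  imports Defs
begin

text \<open>
  After the substitution every argument of a Pochhammer symbol in Phi is a constant times a
  positive power of p: the polytope inequalities together with
  \<alpha>_r + 1/2 \<noteq> |\<zeta> + 1/2| make \<alpha>_r - \<zeta> and 1 + \<alpha>_r + \<zeta> positive, and
  \<alpha>_4 + |\<zeta> + 1/2| < 1/2 does the same for the finite product in u_0. Bounds of the form
  norm ((x;a) - 1) \<le> exp (C norm x) - 1, uniform in small nomes, then show that every
  Pochhammer symbol tends to 1. So the substituted function tends to 1 as p \<rightarrow> 0: its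
  valuation is 0 and its leading coefficient is 1, whatever z is.
\<close>

lemma norm_prodinf_one_plus_minus1_le:
  fixes w :: "nat \<Rightarrow> 'a :: {real_normed_field, banach}"
  assumes w_le: "\<And>i. norm (w i) \<le> b i" and "summable b"
  shows "norm ((\<Prod>i. 1 + w i) - 1) \<le> exp (\<Sum>i. b i) - 1"
proof -
  have b_nonneg: "0 \<le> b i" for i by (rule order_trans[OF norm_ge_zero w_le])
  have "summable (\<lambda>i. norm (w i))"
    by (rule summable_comparison_test[OF _ \<open>summable b\<close>]) (use w_le in auto)
  hence "convergent_prod (\<lambda>i. 1 + w i)"
    by (intro abs_convergent_prod_imp_convergent_prod summable_imp_abs_convergent_prod) simp
  hence lim: "(\<lambda>n. norm ((\<Prod>i\<le>n. 1 + w i) - 1)) \<longlonglongrightarrow> norm ((\<Prod>i. 1 + w i) - 1)"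
    by (intro tendsto_intros convergent_prod_LIMSEQ)
  show ?thesis
  proof (rule LIMSEQ_le_const2[OF lim], intro exI allI impI)
    fix n
    have "norm ((\<Prod>i\<le>n. 1 + w i) - 1) \<le> (\<Prod>i\<le>n. 1 + norm (w i)) - 1"
      by (rule norm_prod_minus1_le_prod_minus1)
    also have "(\<Prod>i\<le>n. 1 + norm (w i)) \<le> exp (\<Sum>i\<le>n. norm (w i))"
      by (rule prod_le_exp_sum) simp
    also have "(\<Sum>i\<le>n. norm (w i)) \<le> (\<Sum>i\<le>n. b i)" by (intro sum_mono w_le)
    also have "\<dots> \<le> (\<Sum>i. b i)" by (rule sum_le_suminf[OF \<open>summable b\<close>]) (use b_nonneg in auto)
    finally show "norm ((\<Prod>i\<le>n. 1 + w i) - 1) \<le> exp (\<Sum>i. b i) - 1" by simp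
  qed
qed

lemma exp_minus1_le_mult_exp:
  assumes "0 \<le> (y::real)"
  shows "exp y - 1 \<le> y * exp y"
proof -
  have "(1 - y) * exp y \<le> exp (-y) * exp y"
    using exp_ge_add_one_self[of "-y"] by (intro mult_right_mono) auto
  thus ?thesis by (simp add: exp_minus field_simps)
qed

lemma norm_qpoch1_minus1_le:
  assumes "norm a \<le> r" "r < 1"
  shows "norm (qpoch1 x a - 1) \<le> exp (norm x / (1 - r)) - 1"
proof -
  have "0 \<le> r" using assms(1) norm_ge_zero order_trans by blast
  have "norm (- (x * a ^ j)) \<le> norm x * r ^ j" for j
    by (simp add: norm_mult norm_power mult_left_mono power_mono assms)
  moreover have "summable (\<lambda>j. norm x * r ^ j)"
    using \<open>0 \<le> r\<close> assms by (intro summable_mult summable_geometric) auto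
  ultimately have "norm ((\<Prod>j. 1 + - (x * a ^ j)) - 1) \<le> exp (\<Sum>j. norm x * r ^ j) - 1"
    by (rule norm_prodinf_one_plus_minus1_le)
  moreover have "(\<Sum>j. norm x * r ^ j) = norm x / (1 - r)"
    using \<open>0 \<le> r\<close> assms by (simp add: suminf_mult suminf_geometric divide_simps)
  ultimately show ?thesis by (simp add: qpoch1_def)
qed

lemma norm_qpoch2_minus1_le:
  fixes x p a :: complex
  assumes "norm p \<le> r" "r < 1" "norm a < 1"
  defines "K \<equiv> norm x / (1 - norm a)"
  shows "norm (qpoch2 x p a - 1) \<le> exp (K * exp K / (1 - r)) - 1"
proof -
  have "0 \<le> K" using assms by (simp add: K_def)
  have "0 \<le> r" using assms(1) norm_ge_zero order_trans by blast
  have "norm (qpoch1 (x * p ^ i) a - 1) \<le> K * exp K * r ^ i" for i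
  proof -
    define y where "y = K * norm p ^ i"
    have "0 \<le> y" "y \<le> K * r ^ i" "y \<le> K"
      using \<open>0 \<le> K\<close> assms(1,2) unfolding y_def
      by (auto intro!: mult_left_mono power_mono mult_right_le_one_le power_le_one)
    have "norm (qpoch1 (x * p ^ i) a - 1) \<le> exp y - 1"
      using norm_qpoch1_minus1_le[of a "norm a" "x * p ^ i"] assms(3)
      by (simp add: y_def K_def norm_mult norm_power)
    also have "\<dots> \<le> y * exp y" by (rule exp_minus1_le_mult_exp[OF \<open>0 \<le> y\<close>])
    also have "\<dots> \<le> K * r ^ i * exp K"
      using \<open>0 \<le> y\<close> \<open>y \<le> K * r ^ i\<close> \<open>y \<le> K\<close> by (intro mult_mono) auto
    finally show ?thesis by (simp add: algebra_simps)
  qed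
  moreover have "summable (\<lambda>i. K * exp K * r ^ i)"
    using \<open>0 \<le> r\<close> assms(2) by (intro summable_mult summable_geometric) auto
  ultimately have "norm ((\<Prod>i. 1 + (qpoch1 (x * p ^ i) a - 1)) - 1)
      \<le> exp (\<Sum>i. K * exp K * r ^ i) - 1"
    by (rule norm_prodinf_one_plus_minus1_le)
  moreover have "(\<Sum>i. K * exp K * r ^ i) = K * exp K / (1 - r)"
    using \<open>0 \<le> r\<close> assms(2) by (simp add: suminf_mult suminf_geometric)
  ultimately show ?thesis by (simp add: qpoch2_def)
qed

lemma tendsto_qpoch1_1:
  assumes "(x \<longlongrightarrow> 0) F" "\<forall>\<^sub>F s in F. norm (a s) \<le> r" "r < 1"
  shows "((\<lambda>s. qpoch1 (x s) (a s)) \<longlongrightarrow> 1) F"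
proof -
  have "\<forall>\<^sub>F s in F. norm (qpoch1 (x s) (a s) - 1) \<le> exp (norm (x s) / (1 - r)) - 1"
    using assms(2) by eventually_elim (rule norm_qpoch1_minus1_le[OF _ assms(3)])
  moreover have "((\<lambda>s. norm (x s) / (1 - r)) \<longlongrightarrow> 0) F"
    by (intro tendsto_divide_zero tendsto_norm_zero assms(1))
  hence "((\<lambda>s. exp (norm (x s) / (1 - r)) - 1) \<longlongrightarrow> 0) F"
    using tendsto_diff[OF tendsto_exp tendsto_const, of _ 0 F 1] by simp
  ultimately have "((\<lambda>s. qpoch1 (x s) (a s) - 1) \<longlongrightarrow> 0) F"
    by (rule Lim_null_comparison)
  thus ?thesis by (simp add: LIM_zero_iff)
qed

lemma tendsto_qpoch2_1:
  assumes "(x \<longlongrightarrow> 0) F" "\<forall>\<^sub>F s in F. norm (p s) \<le> r" "r < 1" "norm a < 1"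
  shows "((\<lambda>s. qpoch2 (x s) (p s) a) \<longlongrightarrow> 1) F"
proof -
  let ?K = "\<lambda>s. norm (x s) / (1 - norm a)"
  have "\<forall>\<^sub>F s in F. norm (qpoch2 (x s) (p s) a - 1) \<le> exp (?K s * exp (?K s) / (1 - r)) - 1"
    using assms(2) by eventually_elim (rule norm_qpoch2_minus1_le[OF _ assms(3,4)])
  moreover have "(?K \<longlongrightarrow> 0) F"
    by (intro tendsto_divide_zero tendsto_norm_zero assms(1))
  hence "((\<lambda>s. ?K s * exp (?K s)) \<longlongrightarrow> 0 * exp 0) F"
    by (intro tendsto_mult tendsto_exp)
  hence "((\<lambda>s. ?K s * exp (?K s) / (1 - r)) \<longlongrightarrow> 0) F"
    by (intro tendsto_divide_zero) simp
  hence "((\<lambda>s. exp (?K s * exp (?K s) / (1 - r)) - 1) \<longlongrightarrow> 0) F"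
    using tendsto_diff[OF tendsto_exp tendsto_const, of _ 0 F 1] by simp
  ultimately have "((\<lambda>s. qpoch2 (x s) (p s) a - 1) \<longlongrightarrow> 0) F"
    by (rule Lim_null_comparison)
  thus ?thesis by (simp add: LIM_zero_iff)
qed

lemma tendsto_of_real_powr_at_right_0:
  assumes "0 < e"
  shows "((\<lambda>p. complex_of_real (p powr e)) \<longlongrightarrow> 0) (at_right 0)"
proof -
  have "((\<lambda>p. p powr e) \<longlongrightarrow> 0) (at_right (0::real))"
    by (rule tendsto_zero_powrI[OF _ tendsto_const])
      (auto intro: tendsto_ident_at eventually_at_right_less[THEN eventually_mono] simp: assms)
  hence "((\<lambda>p. complex_of_real (p powr e)) \<longlongrightarrow> complex_of_real 0) (at_right 0)"
    by (rule tendsto_of_real)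
  thus ?thesis by simp
qed

lemma tendsto_at_right_0_if_eq_powr:
  assumes "0 < e" "\<And>p. 0 < p \<Longrightarrow> f p = c * complex_of_real (p powr e)"
  shows "(f \<longlongrightarrow> 0) (at_right 0)"
proof -
  have "((\<lambda>p. c * complex_of_real (p powr e)) \<longlongrightarrow> 0) (at_right 0)"
    by (intro tendsto_mult_right_zero tendsto_of_real_powr_at_right_0 assms(1))
  moreover have "\<forall>\<^sub>F p in at_right 0. c * complex_of_real (p powr e) = f p"
    using eventually_at_right_less[of 0] by eventually_elim (simp add: assms)
  ultimately show ?thesis by (rule Lim_transform_eventually)
qed

lemma eventually_at_right_0_norm_le_half: "\<forall>\<^sub>F p in at_right 0. norm (complex_of_real p) \<le> 1/2"
  by (rule eventually_at_rightI[of 0 "1/2"]) auto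

lemma tendsto_qpoch1_p_Q_z_div_u:
  assumes "0 < 1 + \<zeta> - a"
  shows "((\<lambda>p. qpoch1 (complex_of_real p * Q * (z * complex_of_real (p powr \<zeta>))
            / (u * complex_of_real (p powr a))) (complex_of_real p)) \<longlongrightarrow> 1) (at_right 0)"
proof (rule tendsto_qpoch1_1[OF _ eventually_at_right_0_norm_le_half])
  have "complex_of_real p * Q * (z * complex_of_real (p powr \<zeta>)) / (u * complex_of_real (p powr a))
      = Q * z / u * complex_of_real (p powr (1 + \<zeta> - a))" if "0 < p" for p
    using that unfolding powr_diff powr_add of_real_mult of_real_divide times_divide_times_eq
    by (simp add: mult_ac)
  then show "((\<lambda>p. complex_of_real p * Q * (z * complex_of_real (p powr \<zeta>))
            / (u * complex_of_real (p powr a))) \<longlongrightarrow> 0) (at_right 0)"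
    by (rule tendsto_at_right_0_if_eq_powr[OF assms])
qed simp

lemma tendsto_qpoch1_Q_div_u_z:
  assumes "0 < - a - \<zeta>"
  shows "((\<lambda>p. qpoch1 (Q / (u * complex_of_real (p powr a) * (z * complex_of_real (p powr \<zeta>))))
            (complex_of_real p)) \<longlongrightarrow> 1) (at_right 0)"
proof (rule tendsto_qpoch1_1[OF _ eventually_at_right_0_norm_le_half])
  have "Q / (u * complex_of_real (p powr a) * (z * complex_of_real (p powr \<zeta>)))
      = Q / (u * z) * complex_of_real (p powr (- a - \<zeta>))" for p
    \<comment> \<open>also for u = 0 or z = 0, where division by zero makes both sides 0\<close>
    unfolding powr_diff powr_minus_divide of_real_divide of_real_1 divide_divide_eq_left
      times_divide_times_eq
    by (simp add: mult_ac)
  then show "((\<lambda>p. Q / (u * complex_of_real (p powr a) * (z * complex_of_real (p powr \<zeta>))))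
           \<longlongrightarrow> 0) (at_right 0)"
    by (intro tendsto_at_right_0_if_eq_powr[OF assms])
qed simp

lemma tendsto_qpoch2_p_u_z_div_Q:
  assumes "0 < 1 + a + \<zeta>" "norm b < 1"
  shows "((\<lambda>p. qpoch2 (complex_of_real p * (u * complex_of_real (p powr a))
            * (z * complex_of_real (p powr \<zeta>)) / Q) (complex_of_real p) b) \<longlongrightarrow> 1) (at_right 0)"
proof (rule tendsto_qpoch2_1[OF _ eventually_at_right_0_norm_le_half _ assms(2)])
  have "complex_of_real p * (u * complex_of_real (p powr a)) * (z * complex_of_real (p powr \<zeta>)) / Q
      = u * z / Q * complex_of_real (p powr (1 + a + \<zeta>))" if "0 < p" for p
    using that unfolding powr_add of_real_mult by (simp add: mult_ac)
  then show "((\<lambda>p. complex_of_real p * (u * complex_of_real (p powr a))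
            * (z * complex_of_real (p powr \<zeta>)) / Q) \<longlongrightarrow> 0) (at_right 0)"
    by (rule tendsto_at_right_0_if_eq_powr[OF assms(1)])
qed simp

lemma tendsto_qpoch2_u_div_Q_z:
  assumes "0 < a - \<zeta>" "norm b < 1"
  shows "((\<lambda>p. qpoch2 (u * complex_of_real (p powr a) / (Q * (z * complex_of_real (p powr \<zeta>))))
            (complex_of_real p) b) \<longlongrightarrow> 1) (at_right 0)"
proof (rule tendsto_qpoch2_1[OF _ eventually_at_right_0_norm_le_half _ assms(2)])
  have "u * complex_of_real (p powr a) / (Q * (z * complex_of_real (p powr \<zeta>)))
      = u / (Q * z) * complex_of_real (p powr (a - \<zeta>))" for p
    unfolding powr_diff of_real_divide times_divide_times_eq by (simp only: mult.assoc)
  then show "((\<lambda>p. u * complex_of_real (p powr a) / (Q * (z * complex_of_real (p powr \<zeta>))))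
           \<longlongrightarrow> 0) (at_right 0)"
    by (intro tendsto_at_right_0_if_eq_powr[OF assms(1)])
qed simp

lemma Fsub_tendsto_1:
  assumes "norm q > 1"
    and exps: "\<And>r. r < 6 \<Longrightarrow> 0 < 1 + \<alpha> r + \<zeta> \<and> 0 < \<alpha> r - \<zeta>"
    and u0_exps: "0 < 1 + \<zeta> - \<alpha> 4" "0 < - \<alpha> 4 - \<zeta>"
  shows "(Fsub n q t u0 u1 \<alpha> \<zeta> z \<longlongrightarrow> 1) (at_right 0)"
proof -
  have "norm (1 / q) < 1" using assms(1) by (simp add: norm_divide divide_less_eq)
  hence "(Fsub n q t u0 u1 \<alpha> \<zeta> z \<longlongrightarrow> 1 / ((\<Prod>k<n. 1 * 1) * 1 * 1 * 1 * 1 * (\<Prod>r<(4::nat). 1 * 1)))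
           (at_right 0)"
    unfolding Fsub_def Phi_def
    by (intro tendsto_divide tendsto_mult tendsto_prod tendsto_const tendsto_qpoch1_p_Q_z_div_u
        tendsto_qpoch1_Q_div_u_z tendsto_qpoch2_p_u_z_div_Q tendsto_qpoch2_u_div_Q_z)
      (use exps u0_exps in auto)
  thus ?thesis by simp
qed

lemma has_val_lc_if_tendsto:
  assumes lim: "(F \<longlongrightarrow> L) (at_right 0)" and "L \<noteq> 0" and "has_val_lc F v c"
  shows "v = 0 \<and> c = L"
proof -
  from \<open>has_val_lc F v c\<close> have "c \<noteq> 0"
    and lc: "((\<lambda>p. F p / complex_of_real (p powr v)) \<longlongrightarrow> c) (at_right 0)"
    unfolding has_val_lc_def by auto
  have pos: "\<forall>\<^sub>F p in at_right 0. 0 < (p::real)" by (rule eventually_at_right_less)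
  have "v = 0"
  proof (rule ccontr)
    assume "v \<noteq> 0"
    then consider "0 < v" | "0 < - v" by linarith
    then show False
    proof cases
      case 1
      have "((\<lambda>p. F p / complex_of_real (p powr v) * complex_of_real (p powr v)) \<longlongrightarrow> c * 0)
          (at_right 0)"
        by (intro tendsto_mult lc tendsto_of_real_powr_at_right_0 1)
      moreover have "\<forall>\<^sub>F p in at_right 0.
          F p / complex_of_real (p powr v) * complex_of_real (p powr v) = F p"
        using pos by eventually_elim simp
      ultimately have "(F \<longlongrightarrow> 0) (at_right 0)" by (simp add: tendsto_cong)
      with lim \<open>L \<noteq> 0\<close> show False using tendsto_unique[OF trivial_limit_at_right_real] by blast
    next
      case 2
      have "((\<lambda>p. F p * complex_of_real (p powr - v)) \<longlongrightarrow> L * 0) (at_right 0)"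
        by (intro tendsto_mult lim tendsto_of_real_powr_at_right_0 2)
      moreover have "\<forall>\<^sub>F p in at_right 0.
          F p * complex_of_real (p powr - v) = F p / complex_of_real (p powr v)"
        using pos by eventually_elim (simp add: powr_minus divide_inverse)
      ultimately have "((\<lambda>p. F p / complex_of_real (p powr v)) \<longlongrightarrow> 0) (at_right 0)"
        by (simp add: tendsto_cong)
      with lc \<open>c \<noteq> 0\<close> show False using tendsto_unique[OF trivial_limit_at_right_real] by blast
    qed
  qed
  moreover have "\<forall>\<^sub>F p in at_right 0. F p / complex_of_real (p powr v) = F p"
    using pos by eventually_elim (simp add: \<open>v = 0\<close>)
  ultimately show ?thesis
    using lc lim tendsto_unique[OF trivial_limit_at_right_real] by (simp add: tendsto_cong)
qed

lemma exponents_pos_if_inP: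
  assumes "inP \<alpha> \<zeta>" "i < 6" "\<alpha> i + 1/2 \<noteq> \<bar>\<zeta> + 1/2\<bar>"
  shows "0 < 1 + \<alpha> i + \<zeta> \<and> 0 < \<alpha> i - \<zeta>"
proof -
  have "\<bar>\<zeta> + 1/2\<bar> - 1/2 \<le> \<alpha> i"
    using assms(1,2) unfolding inP_def by (simp add: add.commute)
  then show ?thesis using assms(3) by (auto split: abs_split)
qed

theorem proposition4p3:
  fixes n :: nat and q u0 u1 :: complex and t :: "nat \<Rightarrow> complex"
    and \<alpha> :: "nat \<Rightarrow> real" and \<zeta> :: real
  assumes "norm q > 1"
    and "inP \<alpha> \<zeta>"
    and "\<not> (\<exists>r<6. \<alpha> r + 1/2 = \<bar>\<zeta> + 1/2\<bar>)"
    and "\<not> (\<alpha> 4 + \<bar>\<zeta> + 1/2\<bar> \<ge> 1/2)"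
  shows "\<exists>C. \<forall>z v c. z \<noteq> 0 \<longrightarrow> has_val_lc (Fsub n q t u0 u1 \<alpha> \<zeta> z) v c \<longrightarrow> c = C"
proof (intro exI[of _ 1] allI impI)
  fix z v c
  assume "has_val_lc (Fsub n q t u0 u1 \<alpha> \<zeta> z) v c"
  moreover have "(Fsub n q t u0 u1 \<alpha> \<zeta> z \<longlongrightarrow> 1) (at_right 0)"
  proof (rule Fsub_tendsto_1[OF \<open>norm q > 1\<close>])
    show "0 < 1 + \<alpha> r + \<zeta> \<and> 0 < \<alpha> r - \<zeta>" if "r < 6" for r
      using exponents_pos_if_inP[OF \<open>inP \<alpha> \<zeta>\<close> that] assms(3) that by blast
    show "0 < 1 + \<zeta> - \<alpha> 4" "0 < - \<alpha> 4 - \<zeta>"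
      using assms(4) abs_ge_self[of "\<zeta> + 1/2"] abs_ge_minus_self[of "\<zeta> + 1/2"] by linarith+
  qed
  ultimately show "c = 1" by (metis has_val_lc_if_tendsto one_neq_zero)
qed

end
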